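(* There exists $n_0$ such that for every $n\ge n_0$, \[\mathrm{ex}(n,T_1,C_4)=\mathcal{N}(T_1,F(n))=\begin{cases}\binom{n}{2}-\frac{3(n-1)}{2} & \text{if } n \text{ is odd},\\[2pt] \binom{n}{2}-2n+3 & \text{if } n \text{ is even}.\end{cases}\]
   Context: $T_1$ (the paw) is the graph on $4$ vertices consisting of a triangle and one further vertex joined to exactly one vertex of the triangle. $C_4$ is the cycle on $4$ vertices. $F(n)$ is the friendship graph on $n$ vertices: it has a vertex $v$ of degree $n-1$, and on the remaining $n-1$ vertices a matching with $\lfloor (n-1)/2\rfloor$ edges (and no other edges). For graphs $H,G$, $\mathcal{N}(H,G)$ is the number of subgraphs of $G$ isomorphic to $H$, and $\mathrm{ex}(n,H,F)$ is the maximum of $\mathcal{N}(H,G)$ over $F$-free graphs $G$ on $n$ vertices. *)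

theory Defs
  imports Main
begin

type_synonym 'a graph = "'a set \<times> 'a set set"

definition simple_graph :: "'a graph \<Rightarrow> bool" where
  "simple_graph G \<longleftrightarrow> finite (fst G) \<and>
     (\<forall>e\<in>snd G. \<exists>u v. e = {u, v} \<and> u \<noteq> v \<and> u \<in> fst G \<and> v \<in> fst G)"

definition graph_iso :: "'a graph \<Rightarrow> 'b graph \<Rightarrow> bool" where
  "graph_iso H G \<longleftrightarrow> (\<exists>f. bij_betw f (fst H) (fst G) \<and> (\<lambda>e. f ` e) ` snd H = snd G)"

definition subgraphs :: "'a graph \<Rightarrow> 'a graph set" where
  "subgraphs G = {(V', E'). V' \<subseteq> fst G \<and> E' \<subseteq> snd G \<and> (\<forall>e\<in>E'. e \<subseteq> V')}"

definition count_sub :: "'b graph \<Rightarrow> 'a graph \<Rightarrow> nat" where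
  "count_sub H G = card {S \<in> subgraphs G. graph_iso H S}"

text \<open>Graphs on n vertices (vertex set fixed to {0..<n}; isomorphism invariant).\<close>
definition graphs_on :: "nat \<Rightarrow> nat graph set" where
  "graphs_on n = {G. fst G = {0..<n} \<and> simple_graph G}"

definition free :: "'b graph \<Rightarrow> 'a graph \<Rightarrow> bool" where
  "free F G \<longleftrightarrow> count_sub F G = 0"

definition ex_gen :: "nat \<Rightarrow> 'a graph \<Rightarrow> 'b graph \<Rightarrow> nat" where
  "ex_gen n H F = Max {count_sub H G | G. G \<in> graphs_on n \<and> free F G}"

text \<open>The paw T_1: triangle 0,1,2 plus vertex 3 joined to 2.\<close>
definition paw :: "nat graph" where
  "paw = ({0,1,2,3}, {{0,1},{1,2},{0,2},{2,3}})"

definition C4 :: "nat graph" where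
  "C4 = ({0,1,2,3}, {{0,1},{1,2},{2,3},{3,0}})"

definition friendship :: "nat \<Rightarrow> nat graph" where
  "friendship n = ({0..<n},
     {{0, v} | v. 1 \<le> v \<and> v < n} \<union>
     {{2*i - 1, 2*i} | i. 1 \<le> i \<and> i \<le> (n - 1) div 2})"

end

theory Submission
  imports Defs
begin

(* In a C4-free graph two distinct vertices have at most one common neighbour.  Counting each
   paw by its triangle (a, b, c) and the pendant edge c e gives twice the paw count as
   \<Sum>c m(c) (d(c) - 2), where m(c) is the number of ordered edges inside the neighbourhood of c;
   m(c) is even and at most d(c).  If all degrees are below 8 the count is linear in n.  Otherwise
   pick x of degree D \<ge> 8 and let k = n - 1 - D be the number of its non-neighbours.  The term of x
   is at most m(x) (D - 2); the remaining terms are controlled by double counting pairs of vertices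
   with a common neighbour other than x, each of which has only one such neighbour, and they sum to
   at most D k + k^2 + 2 k.  This totals at most 2 floor((n-1)/2) (n - 3), with equality for the
   friendship graph, in which only the centre has degree above 2. *)

lemma card_eq_mult_card_image:
  assumes "finite A" and "\<And>x. x \<in> A \<Longrightarrow> card {y \<in> A. f y = f x} = k"
  shows "card A = k * card (f ` A)"
proof -
  have "\<And>x. x \<in> A \<Longrightarrow> {z \<in> f ` A. f x = z} = {f x}"
    by auto
  then have "card A = (\<Sum>x\<in>A. card {z \<in> f ` A. f x = z})"
    by simp
  also have "\<dots> = k * card (f ` A)"
    using assms by (intro sum_multicount) auto
  finally show ?thesis .
qed

lemma card_off_diagonal:
  assumes "finite S"
  shows "card {(u, w). u \<in> S \<and> w \<in> S \<and> u \<noteq> w} = card S * (card S - 1)"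
proof -
  have "{(u, w). u \<in> S \<and> w \<in> S \<and> u \<noteq> w} = S \<times> S - (\<lambda>u. (u, u)) ` S"
    by auto
  moreover have "card ((\<lambda>u. (u, u)) ` S) = card S"
    by (simp add: card_image inj_on_def)
  ultimately show ?thesis
    using assms card_Diff_subset[of "(\<lambda>u. (u, u)) ` S" "S \<times> S"]
    by (simp add: card_cartesian_product diff_mult_distrib2 image_subset_iff)
qed

lemma paw_bound_arith:
  fixes D k m s :: nat
  assumes "even m" "m \<le> D" "8 \<le> D"
    and "s \<le> D * k + k * k + 2 * k" and "k = 1 \<Longrightarrow> s \<le> 5"
  shows "m * (D - 2) + s \<le> 2 * ((D + k) div 2) * (D + k - 2)"
proof -
  have "m * (D - 2) \<le> D * (D - 2)"
    using assms(2) by (rule mult_right_mono) simp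
  consider "k = 0" | "k = 1" | "k \<ge> 2"
    by linarith
  then show ?thesis
  proof cases
    case 1
    with assms have "m \<le> 2 * (D div 2)"
      by (auto elim!: evenE)
    then show ?thesis
      using 1 assms(4) by (simp add: mult_right_mono)
  next
    case 2
    obtain d where "D = d + 8"
      using assms(3) le_Suc_ex by (metis add.commute)
    then have "D * (D - 2) + 5 \<le> D * (D - 1)"
      by (simp add: algebra_simps)
    also have "\<dots> \<le> 2 * ((D + 1) div 2) * (D - 1)"
      by (intro mult_right_mono) linarith+
    finally have "m * (D - 2) + s \<le> 2 * ((D + 1) div 2) * (D - 1)"
      using 2 assms(5) \<open>m * (D - 2) \<le> D * (D - 2)\<close> by linarith
    then show ?thesis
      using 2 by simp
  next
    case 3
    obtain d j where "D = d + 8" "k = j + 2"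
      using assms(3) 3 le_Suc_ex by (metis add.commute)
    moreover have "D + k - 1 \<le> 2 * ((D + k) div 2)"
      by linarith
    ultimately have "(D + k - 1) * (D + k - 2) \<le> 2 * ((D + k) div 2) * (D + k - 2)"
      by (intro mult_right_mono) auto
    moreover have "D * (D - 2) + D * k + k * k + 2 * k \<le> (D + k - 1) * (D + k - 2)"
      using \<open>D = d + 8\<close> \<open>k = j + 2\<close> by (simp add: algebra_simps)
    ultimately show ?thesis
      using assms(4) \<open>m * (D - 2) \<le> D * (D - 2)\<close> by linarith
  qed
qed

section \<open>Paws in C4-free graphs\<close>

text \<open>A tuple \<open>(a, b, c, e)\<close> is a triangle \<open>abc\<close> with pendant edge \<open>ce\<close>; each paw arises from
  exactly the two tuples that differ by swapping \<open>a\<close> and \<open>b\<close>.\<close>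

definition ordered_paws :: "('a \<Rightarrow> 'a \<Rightarrow> bool) \<Rightarrow> ('a \<times> 'a \<times> 'a \<times> 'a) set" where
  "ordered_paws adj = {(a, b, c, e). adj a b \<and> adj b c \<and> adj a c \<and> adj c e \<and> e \<noteq> a \<and> e \<noteq> b}"

locale c4_free_graph =
  fixes V :: "'a set" and adj :: "'a \<Rightarrow> 'a \<Rightarrow> bool"
  assumes finite_V: "finite V"
    and adj_in_V: "adj u v \<Longrightarrow> u \<in> V \<and> v \<in> V"
    and adj_sym: "adj u v \<Longrightarrow> adj v u"
    and adj_irrefl: "\<not> adj u u"
    and no_C4: "adj a b \<Longrightarrow> adj b c \<Longrightarrow> adj c d \<Longrightarrow> adj d a \<Longrightarrow> a = c \<or> b = d"
begin

lemma common_nbr_unique: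
  assumes "adj u c" "adj w c" "adj u c'" "adj w c'" "u \<noteq> w"
  shows "c = c'"
  using no_C4[of u c w c'] assms adj_sym by blast

definition nbrs :: "'a \<Rightarrow> 'a set" where
  "nbrs c = {v. adj c v}"

abbreviation deg :: "'a \<Rightarrow> nat" where
  "deg c \<equiv> card (nbrs c)"

lemma nbrs_subset: "nbrs c \<subseteq> V"
  using adj_in_V by (auto simp: nbrs_def)

lemma finite_nbrs: "finite (nbrs c)"
  using nbrs_subset finite_V by (rule finite_subset)

definition nbhd_edges :: "'a \<Rightarrow> ('a \<times> 'a) set" where
  "nbhd_edges c = {(a, b). adj c a \<and> adj c b \<and> adj a b}"

lemma nbhd_edges_subset: "nbhd_edges c \<subseteq> nbrs c \<times> nbrs c"
  by (auto simp: nbhd_edges_def nbrs_def)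

lemma finite_nbhd_edges: "finite (nbhd_edges c)"
  by (rule finite_subset[OF nbhd_edges_subset]) (simp add: finite_nbrs)

lemma card_ordered_paws:
  "card (ordered_paws adj) = (\<Sum>c\<in>V. card (nbhd_edges c) * (deg c - 2))"
proof -
  let ?pendants = "\<lambda>c. Sigma (nbhd_edges c) (\<lambda>(a, b). nbrs c - {a, b})"
  let ?f = "\<lambda>(c, (a, b), e). (a, b, c, e)"
  have card_pendants: "card (?pendants c) = card (nbhd_edges c) * (deg c - 2)" for c
  proof -
    have "card (nbrs c - {a, b}) = deg c - 2" if "(a, b) \<in> nbhd_edges c" for a b
    proof -
      have "a \<noteq> b" "{a, b} \<subseteq> nbrs c"
        using that adj_irrefl by (auto simp: nbhd_edges_def nbrs_def)
      then show ?thesis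
        using finite_nbrs by (simp add: card_Diff_subset)
    qed
    then show ?thesis
      using finite_nbhd_edges finite_nbrs by (simp add: card_SigmaI split_beta)
  qed
  have "ordered_paws adj = ?f ` Sigma V ?pendants"
    using adj_in_V adj_sym
    by (auto simp: ordered_paws_def nbhd_edges_def nbrs_def image_iff)
  moreover have "inj_on ?f (Sigma V ?pendants)"
    by (intro inj_onI) (auto split: prod.splits)
  ultimately have "card (ordered_paws adj) = card (Sigma V ?pendants)"
    by (simp add: card_image)
  also have "\<dots> = (\<Sum>c\<in>V. card (?pendants c))"
    using finite_V finite_nbhd_edges finite_nbrs by (intro card_SigmaI) auto
  finally show ?thesis
    by (simp add: card_pendants)
qed

lemma inj_on_fst_nbhd_edges: "inj_on fst (nbhd_edges c)"
proof (rule inj_onI)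
  fix p q
  assume "p \<in> nbhd_edges c" "q \<in> nbhd_edges c" "fst p = fst q"
  then obtain a b b' where "p = (a, b)" "q = (a, b')"
    and "adj c a" "adj c b" "adj a b" "adj c b'" "adj a b'"
    by (auto simp: nbhd_edges_def)
  moreover have "a \<noteq> c"
    using adj_irrefl \<open>adj c a\<close> by blast
  ultimately show "p = q"
    using common_nbr_unique[of a b c b'] by simp
qed

lemma card_fst_nbhd_edges: "card (fst ` nbhd_edges c) = card (nbhd_edges c)"
  using inj_on_fst_nbhd_edges by (rule card_image)

lemma fst_nbhd_edges_subset: "fst ` nbhd_edges c \<subseteq> nbrs c"
  using nbhd_edges_subset by force

lemma card_nbhd_edges_le: "card (nbhd_edges c) \<le> deg c"
  using card_mono[OF finite_nbrs fst_nbhd_edges_subset] by (simp add: card_fst_nbhd_edges)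

lemma even_card_nbhd_edges: "even (card (nbhd_edges c))"
proof -
  let ?edge = "\<lambda>(a, b). {a, b}"
  have fibre: "card {q \<in> nbhd_edges c. ?edge q = ?edge p} = 2" if p_edge: "p \<in> nbhd_edges c" for p
  proof -
    obtain a b where p: "p = (a, b)" and "adj c a" "adj c b" "adj a b"
      using p_edge by (cases p) (simp add: nbhd_edges_def)
    then have "{q \<in> nbhd_edges c. ?edge q = ?edge p} = {(a, b), (b, a)}"
      using adj_sym by (auto simp: nbhd_edges_def doubleton_eq_iff)
    moreover have "a \<noteq> b"
      using \<open>adj a b\<close> adj_irrefl by blast
    ultimately show ?thesis
      by simp
  qed
  have "card (nbhd_edges c) = 2 * card (?edge ` nbhd_edges c)"
    using finite_nbhd_edges fibre by (rule card_eq_mult_card_image)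
  then show ?thesis
    by simp
qed

lemma paws_at_plus_deg_le:
  "card (nbhd_edges c) * (deg c - 2) + deg c \<le> deg c * (deg c - 1) + (if deg c = 1 then 1 else 0)"
proof (cases "deg c \<ge> 2")
  case True
  then obtain j where j: "deg c = j + 2"
    by (metis le_add_diff_inverse2)
  have "card (nbhd_edges c) * j \<le> (j + 2) * j"
    using card_nbhd_edges_le j by (metis mult_right_mono zero_le)
  then show ?thesis
    using j by (simp add: algebra_simps)
next
  case False
  then show ?thesis
    using card_nbhd_edges_le[of c] by (auto simp: not_le less_Suc_eq)
qed

definition non_nbrs :: "'a \<Rightarrow> 'a set" where
  "non_nbrs x = V - nbrs x - {x}"

definition cross_edges :: "'a \<Rightarrow> ('a \<times> 'a) set" where
  "cross_edges x = {(a, w). a \<in> nbrs x \<and> w \<in> non_nbrs x \<and> adj a w}"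

definition outer_edges :: "'a \<Rightarrow> ('a \<times> 'a) set" where
  "outer_edges x = {(v, w). v \<in> non_nbrs x \<and> w \<in> non_nbrs x \<and> adj v w}"

definition cross_2paths :: "'a \<Rightarrow> ('a \<times> 'a) set" where
  "cross_2paths x = {(a, w). a \<in> nbrs x \<and> w \<in> non_nbrs x \<and> (\<exists>v. adj a v \<and> adj v w)}"

lemma non_nbrs_iff: "w \<in> non_nbrs x \<longleftrightarrow> w \<in> V \<and> \<not> adj x w \<and> w \<noteq> x"
  by (auto simp: non_nbrs_def nbrs_def)

lemma finite_non_nbrs: "finite (non_nbrs x)"
  using finite_V by (simp add: non_nbrs_def)

lemma finite_cross_edges: "finite (cross_edges x)"
  using finite_nbrs finite_non_nbrs
  by (auto intro: finite_subset[of _ "nbrs x \<times> non_nbrs x"] simp: cross_edges_def)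

lemma finite_outer_edges: "finite (outer_edges x)"
  using finite_non_nbrs
  by (auto intro: finite_subset[of _ "non_nbrs x \<times> non_nbrs x"] simp: outer_edges_def)

lemma card_V_split:
  assumes "x \<in> V"
  shows "card V = 1 + deg x + card (non_nbrs x)"
proof -
  have "insert x (nbrs x) \<subseteq> V"
    using assms nbrs_subset by blast
  moreover have "non_nbrs x = V - insert x (nbrs x)"
    by (auto simp: non_nbrs_def)
  ultimately have "card (non_nbrs x) = card V - card (insert x (nbrs x))"
    and "card (insert x (nbrs x)) \<le> card V"
    using finite_V by (metis card_Diff_subset finite_subset, metis card_mono)
  moreover have "card (insert x (nbrs x)) = 1 + deg x"
    using finite_nbrs adj_irrefl by (simp add: nbrs_def)
  ultimately show ?thesis
    by linarith
qed

lemma card_cross_edges_le: "card (cross_edges x) \<le> card (non_nbrs x)"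
proof (rule card_le_if_inj_on_rel[where r = "\<lambda>p w. snd p = w"])
  fix p q w
  assume "p \<in> cross_edges x" "q \<in> cross_edges x" "w \<in> non_nbrs x"
    "snd p = w" "snd q = w"
  then obtain a a' where "p = (a, w)" "q = (a', w)" "adj x a" "adj x a'" "adj a w" "adj a' w"
    "w \<noteq> x"
    by (auto simp: cross_edges_def nbrs_def non_nbrs_iff)
  then show "p = q"
    using common_nbr_unique[of a x a' w] adj_sym by blast
qed (auto simp: cross_edges_def finite_non_nbrs)

lemma card_outer_edges_le: "card (outer_edges x) \<le> card (non_nbrs x) * card (non_nbrs x)"
proof -
  have "outer_edges x \<subseteq> non_nbrs x \<times> non_nbrs x"
    by (auto simp: outer_edges_def)
  then show ?thesis
    using finite_non_nbrs by (metis card_cartesian_product card_mono finite_SigmaI)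
qed

lemma card_cross_2paths_le_deg: "card (cross_2paths x) \<le> deg x * card (non_nbrs x)"
proof -
  have "cross_2paths x \<subseteq> nbrs x \<times> non_nbrs x"
    by (auto simp: cross_2paths_def)
  then show ?thesis
    using finite_nbrs finite_non_nbrs by (metis card_cartesian_product card_mono finite_SigmaI)
qed

lemma card_cross_2paths_le: "card (cross_2paths x) \<le> card (cross_edges x) + card (outer_edges x)"
proof -
  have "card (cross_2paths x) \<le> card (cross_edges x \<union> outer_edges x)"
  proof (rule card_le_if_inj_on_rel[where r = "\<lambda>p q. adj (fst p) (fst q) \<and> snd p = snd q"])
    show "finite (cross_edges x \<union> outer_edges x)"
      using finite_cross_edges finite_outer_edges by blast
  next
    fix p
    assume "p \<in> cross_2paths x"
    then obtain a w v where "p = (a, w)" "adj x a" "w \<in> non_nbrs x" "adj a v" "adj v w"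
      by (auto simp: cross_2paths_def nbrs_def)
    moreover have "v \<noteq> x" "v \<in> V"
      using calculation adj_in_V adj_sym by (auto simp: non_nbrs_iff)
    ultimately show "\<exists>q. q \<in> cross_edges x \<union> outer_edges x \<and>
        adj (fst p) (fst q) \<and> snd p = snd q"
      by (intro exI[of _ "(v, w)"])
        (auto simp: cross_edges_def outer_edges_def non_nbrs_iff nbrs_def)
  next
    fix p q r
    assume "p \<in> cross_2paths x" "q \<in> cross_2paths x" "r \<in> cross_edges x \<union> outer_edges x"
      "adj (fst p) (fst r) \<and> snd p = snd r" "adj (fst q) (fst r) \<and> snd q = snd r"
    then obtain a a' v w where "p = (a, w)" "q = (a', w)" "adj x a" "adj x a'" "adj a v" "adj a' v"
      "adj v w" "w \<in> non_nbrs x"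
      by (auto simp: cross_2paths_def nbrs_def cross_edges_def outer_edges_def)
    moreover have "v \<noteq> x"
      using calculation adj_sym by (auto simp: non_nbrs_iff)
    ultimately show "p = q"
      using common_nbr_unique[of a x a' v] adj_sym by blast
  qed
  then show ?thesis
    using card_Un_le le_trans by blast
qed

lemma sum_deg_off_vertex_ge:
  assumes "x \<in> V"
  shows "deg x + card (nbhd_edges x) + 2 * card (cross_edges x) + card (outer_edges x)
    \<le> (\<Sum>c\<in>V-{x}. deg c)"
proof -
  let ?E = "nbrs x \<times> {x} \<union> nbhd_edges x \<union> cross_edges x \<union> prod.swap ` cross_edges x
    \<union> outer_edges x"
  have "nbrs x \<times> {x} \<inter> nbhd_edges x = {}"
    "(nbrs x \<times> {x} \<union> nbhd_edges x) \<inter> cross_edges x = {}"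
    "(nbrs x \<times> {x} \<union> nbhd_edges x \<union> cross_edges x) \<inter> prod.swap ` cross_edges x = {}"
    "(nbrs x \<times> {x} \<union> nbhd_edges x \<union> cross_edges x \<union> prod.swap ` cross_edges x)
      \<inter> outer_edges x = {}"
    using adj_irrefl
    by (fastforce simp: nbhd_edges_def cross_edges_def outer_edges_def non_nbrs_iff nbrs_def)+
  then have card_E: "card ?E = deg x + card (nbhd_edges x) + 2 * card (cross_edges x) + card (outer_edges x)"
    using finite_nbrs finite_nbhd_edges finite_cross_edges finite_outer_edges
    by (simp add: card_Un_disjoint card_image card_cartesian_product)
  have "card ?E \<le> card (Sigma (V - {x}) nbrs)"
    using finite_V finite_nbrs adj_sym adj_in_V adj_irrefl
    by (intro card_mono)
      (auto simp: nbhd_edges_def cross_edges_def outer_edges_def non_nbrs_iff nbrs_def)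
  also have "\<dots> = (\<Sum>c\<in>V-{x}. deg c)"
    using finite_V finite_nbrs by (simp add: card_SigmaI)
  finally show ?thesis
    by (simp only: card_E)
qed

definition two_step_nbrs :: "'a \<Rightarrow> 'a set" where
  "two_step_nbrs x = {w. w \<noteq> x \<and> (\<exists>c. adj x c \<and> adj c w)}"

lemma card_two_step_nbrs_le:
  "card (two_step_nbrs x) \<le> card (nbhd_edges x) + card (cross_edges x)"
proof -
  have "two_step_nbrs x \<subseteq> fst ` nbhd_edges x \<union> snd ` cross_edges x"
  proof
    fix w
    assume "w \<in> two_step_nbrs x"
    then obtain c where "w \<noteq> x" "adj x c" "adj c w"
      by (auto simp: two_step_nbrs_def)
    then have "(w, c) \<in> nbhd_edges x \<or> (c, w) \<in> cross_edges x"
      using adj_sym adj_in_V by (auto simp: nbhd_edges_def cross_edges_def non_nbrs_iff nbrs_def)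
    then show "w \<in> fst ` nbhd_edges x \<union> snd ` cross_edges x"
      by force
  qed
  then have "card (two_step_nbrs x) \<le> card (fst ` nbhd_edges x \<union> snd ` cross_edges x)"
    using finite_nbhd_edges finite_cross_edges by (intro card_mono) auto
  also have "\<dots> \<le> card (fst ` nbhd_edges x) + card (snd ` cross_edges x)"
    by (rule card_Un_le)
  finally show ?thesis
    using card_fst_nbhd_edges[of x] card_image_le[OF finite_cross_edges, of snd x] by linarith
qed

lemma common_nbr_pair_cases:
  assumes "c \<in> V - {x}" "adj c u" "adj c w" "u \<noteq> w"
  shows "(u, w) \<in> {x} \<times> two_step_nbrs x \<union> two_step_nbrs x \<times> {x} \<union> cross_2paths x
    \<union> prod.swap ` cross_2paths x \<union> non_nbrs x \<times> non_nbrs x"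
proof -
  have "u \<in> V" "w \<in> V"
    using assms adj_in_V by auto
  show ?thesis
  proof (cases "u = x \<or> w = x")
    case True
    then show ?thesis
      using assms adj_sym by (auto simp: two_step_nbrs_def)
  next
    case False
    have "\<not> (adj x u \<and> adj x w)"
      using common_nbr_unique[of u c w x] assms adj_sym by auto
    moreover have "(u, w) \<in> cross_2paths x" if "adj x u" "\<not> adj x w"
      using that False assms \<open>w \<in> V\<close> adj_sym by (auto simp: cross_2paths_def nbrs_def non_nbrs_iff)
    moreover have "(w, u) \<in> cross_2paths x" if "\<not> adj x u" "adj x w"
      using that False assms \<open>u \<in> V\<close> adj_sym by (auto simp: cross_2paths_def nbrs_def non_nbrs_iff)
    ultimately show ?thesis
      using False \<open>u \<in> V\<close> \<open>w \<in> V\<close> by (auto simp: non_nbrs_iff)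
  qed
qed

lemma sum_deg_pairs_off_vertex_le:
  assumes "x \<in> V"
  shows "(\<Sum>c\<in>V-{x}. deg c * (deg c - 1))
    \<le> 2 * card (two_step_nbrs x) + 2 * card (cross_2paths x) + card (non_nbrs x) * card (non_nbrs x)"
proof -
  let ?pairs = "\<lambda>c. {(u, w). u \<in> nbrs c \<and> w \<in> nbrs c \<and> u \<noteq> w}"
  let ?R = "{x} \<times> two_step_nbrs x \<union> two_step_nbrs x \<times> {x} \<union> cross_2paths x
    \<union> prod.swap ` cross_2paths x \<union> non_nbrs x \<times> non_nbrs x"
  have finite_pairs: "finite (?pairs c)" for c
    using finite_nbrs by (auto intro: finite_subset[of _ "nbrs c \<times> nbrs c"])
  have same_centre: "c = c'" if "(u, w) \<in> ?pairs c" "(u, w) \<in> ?pairs c'" for c c' u w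
    using that common_nbr_unique[of u c w c'] adj_sym by (simp add: nbrs_def)
  have "(\<Sum>c\<in>V-{x}. deg c * (deg c - 1)) = (\<Sum>c\<in>V-{x}. card (?pairs c))"
    using finite_nbrs by (simp add: card_off_diagonal)
  also have "\<dots> = card (\<Union>c\<in>V-{x}. ?pairs c)"
    using finite_V finite_pairs same_centre by (intro card_UN_disjoint[symmetric]) blast+
  also have "\<dots> \<le> card ?R"
  proof (rule card_mono)
    have "?R \<subseteq> V \<times> V"
      using assms adj_in_V nbrs_subset
      by (auto simp: two_step_nbrs_def cross_2paths_def non_nbrs_iff)
    then show "finite ?R"
      using finite_V finite_subset by blast
    show "(\<Union>c\<in>V-{x}. ?pairs c) \<subseteq> ?R"
      using common_nbr_pair_cases[of _ x] unfolding nbrs_def by blast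
  qed
  also have "\<dots> \<le> 2 * card (two_step_nbrs x) + 2 * card (cross_2paths x)
      + card (non_nbrs x) * card (non_nbrs x)"
  proof -
    have "card ?R \<le> card ({x} \<times> two_step_nbrs x) + card (two_step_nbrs x \<times> {x})
        + card (cross_2paths x) + card (prod.swap ` cross_2paths x) + card (non_nbrs x \<times> non_nbrs x)"
      by (rule order_trans[OF card_Un_le] add_mono card_Un_le order_refl)+
    then show ?thesis
      by (simp add: card_cartesian_product card_image)
  qed
  finally show ?thesis .
qed

lemma card_deg_one_le:
  assumes "x \<in> V"
  shows "card {c \<in> V - {x}. deg c = 1} \<le> deg x - card (nbhd_edges x) + card (non_nbrs x)"
proof -
  have "{c \<in> V - {x}. deg c = 1} \<subseteq> (nbrs x - fst ` nbhd_edges x) \<union> non_nbrs x"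
  proof
    fix c
    assume c: "c \<in> {c \<in> V - {x}. deg c = 1}"
    have "c \<notin> fst ` nbhd_edges x"
    proof
      assume "c \<in> fst ` nbhd_edges x"
      then obtain b where "adj x c" "adj x b" "adj c b"
        by (auto simp: nbhd_edges_def)
      then have "{x, b} \<subseteq> nbrs c" "x \<noteq> b"
        using adj_sym adj_irrefl by (auto simp: nbrs_def)
      then have "2 \<le> deg c"
        using card_mono[OF finite_nbrs, of "{x, b}" c] by simp
      with c show False
        by simp
    qed
    then show "c \<in> (nbrs x - fst ` nbhd_edges x) \<union> non_nbrs x"
      using c by (auto simp: non_nbrs_iff nbrs_def)
  qed
  then have "card {c \<in> V - {x}. deg c = 1} \<le> card ((nbrs x - fst ` nbhd_edges x) \<union> non_nbrs x)"
    using finite_nbrs finite_non_nbrs by (intro card_mono) auto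
  also have "\<dots> \<le> card (nbrs x - fst ` nbhd_edges x) + card (non_nbrs x)"
    by (rule card_Un_le)
  also have "card (nbrs x - fst ` nbhd_edges x) = deg x - card (nbhd_edges x)"
    using card_Diff_subset[OF finite_subset[OF fst_nbhd_edges_subset finite_nbrs] fst_nbhd_edges_subset]
    by (simp add: card_fst_nbhd_edges)
  finally show ?thesis .
qed

lemma sum_paws_off_vertex_le:
  assumes "x \<in> V"
  shows "(\<Sum>c\<in>V-{x}. card (nbhd_edges c) * (deg c - 2)) + card (outer_edges x)
    \<le> 2 * card (cross_2paths x) + card (non_nbrs x) * card (non_nbrs x) + card (non_nbrs x)"
proof -
  have "(\<Sum>c\<in>V-{x}. card (nbhd_edges c) * (deg c - 2)) + (\<Sum>c\<in>V-{x}. deg c)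
      = (\<Sum>c\<in>V-{x}. card (nbhd_edges c) * (deg c - 2) + deg c)"
    by (simp add: sum.distrib)
  also have "\<dots> \<le> (\<Sum>c\<in>V-{x}. deg c * (deg c - 1) + (if deg c = 1 then 1 else 0))"
    by (intro sum_mono paws_at_plus_deg_le)
  also have "\<dots> = (\<Sum>c\<in>V-{x}. deg c * (deg c - 1)) + card {c \<in> V - {x}. deg c = 1}"
    using finite_V by (simp add: sum.distrib sum.If_cases Int_def)
  finally show ?thesis
    using sum_deg_off_vertex_ge[OF assms] sum_deg_pairs_off_vertex_le[OF assms] card_deg_one_le[OF assms]
      card_two_step_nbrs_le[of x] card_nbhd_edges_le[of x]
    by linarith
qed

lemma card_ordered_paws_le_of_high_deg:
  assumes "x \<in> V" "8 \<le> deg x"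
  shows "card (ordered_paws adj) \<le> 2 * ((card V - 1) div 2) * (card V - 3)"
proof -
  let ?D = "deg x" and ?k = "card (non_nbrs x)" and ?m = "card (nbhd_edges x)"
  let ?s = "\<Sum>c\<in>V-{x}. card (nbhd_edges c) * (deg c - 2)"
  have "card (ordered_paws adj) = ?m * (?D - 2) + ?s"
    unfolding card_ordered_paws using finite_V assms(1) by (simp add: sum.remove)
  also have "\<dots> \<le> 2 * ((?D + ?k) div 2) * (?D + ?k - 2)"
  proof (rule paw_bound_arith)
    show "even ?m" "?m \<le> ?D" "8 \<le> ?D"
      using even_card_nbhd_edges card_nbhd_edges_le assms(2) by auto
    have off_x: "?s + card (outer_edges x) \<le> 2 * card (cross_2paths x) + ?k * ?k + ?k"
      by (rule sum_paws_off_vertex_le[OF assms(1)])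
    moreover have paths: "card (cross_2paths x) \<le> ?k + card (outer_edges x)"
      using card_cross_2paths_le[of x] card_cross_edges_le[of x] by linarith
    ultimately show "?s \<le> ?D * ?k + ?k * ?k + 2 * ?k"
      using card_cross_2paths_le_deg[of x] by linarith
    show "?s \<le> 5" if "?k = 1"
      using off_x paths card_outer_edges_le[of x] that by simp
  qed
  finally show ?thesis
    using card_V_split[OF assms(1)] by simp
qed

lemma card_ordered_paws_le_of_low_deg:
  assumes "\<And>c. c \<in> V \<Longrightarrow> deg c \<le> 7"
  shows "card (ordered_paws adj) \<le> 35 * card V"
proof -
  have "card (nbhd_edges c) * (deg c - 2) \<le> 7 * 5" if "c \<in> V" for c
    using assms[OF that] card_nbhd_edges_le[of c] by (intro mult_mono) auto
  then have "card (ordered_paws adj) \<le> (\<Sum>c\<in>V. 7 * 5)"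
    unfolding card_ordered_paws by (rule sum_mono)
  then show ?thesis
    by simp
qed

lemma card_ordered_paws_le:
  assumes "50 \<le> card V"
  shows "card (ordered_paws adj) \<le> 2 * ((card V - 1) div 2) * (card V - 3)"
proof (cases "\<exists>x\<in>V. 8 \<le> deg x")
  case True
  then show ?thesis
    using card_ordered_paws_le_of_high_deg by auto
next
  case False
  then have "card (ordered_paws adj) \<le> 35 * card V"
    by (intro card_ordered_paws_le_of_low_deg) auto
  also have "\<dots> \<le> (card V - 2) * (card V - 3)"
  proof -
    obtain j where "card V = j + 50"
      using assms le_Suc_ex by (metis add.commute)
    then show ?thesis
      by (simp add: algebra_simps)
  qed
  also have "\<dots> \<le> 2 * ((card V - 1) div 2) * (card V - 3)"
    by (intro mult_right_mono) auto
  finally show ?thesis .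
qed

end

section \<open>Subgraph counts\<close>

lemma graph_iso_quadruple_iff:
  fixes E :: "nat set set"
  assumes "\<forall>e\<in>E. e \<subseteq> {0, 1, 2, 3}"
  shows "graph_iso ({0, 1, 2, 3}, E) S \<longleftrightarrow>
    (\<exists>a b c d. distinct [a, b, c, d] \<and> S = ({a, b, c, d}, image ((!) [a, b, c, d]) ` E))"
proof
  assume "graph_iso ({0, 1, 2, 3}, E) S"
  then obtain f where f: "bij_betw f {0, 1, 2, 3} (fst S)" "image f ` E = snd S"
    by (auto simp: graph_iso_def)
  let ?xs = "[f 0, f 1, f 2, f 3]"
  have "image ((!) ?xs) ` E = image f ` E"
  proof (intro image_cong refl)
    fix e i
    assume "e \<in> E" "i \<in> e"
    then have "i \<in> {0, 1, 2, 3}"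
      using assms by blast
    then show "?xs ! i = f i"
      by auto
  qed
  moreover have "inj_on f {0, 1, 2, 3}" and "fst S = {f 0, f 1, f 2, f 3}"
    using f(1) by (auto simp: bij_betw_def)
  moreover from this(1) have "distinct ?xs"
    by (simp add: inj_on_def)
  ultimately show "\<exists>a b c d. distinct [a, b, c, d] \<and> S = ({a, b, c, d}, image ((!) [a, b, c, d]) ` E)"
    using f(2) by (intro exI[of _ "f 0"] exI[of _ "f 1"] exI[of _ "f 2"] exI[of _ "f 3"])
      (simp add: prod_eq_iff)
next
  assume "\<exists>a b c d. distinct [a, b, c, d] \<and> S = ({a, b, c, d}, image ((!) [a, b, c, d]) ` E)"
  then obtain a b c d where "distinct [a, b, c, d]" "S = ({a, b, c, d}, image ((!) [a, b, c, d]) ` E)"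
    by blast
  moreover have "{0, 1, 2, 3} = {..<length [a, b, c, d]}"
    by auto
  ultimately show "graph_iso ({0, 1, 2, 3}, E) S"
    unfolding graph_iso_def by (intro exI[of _ "(!) [a, b, c, d]"]) (simp add: bij_betw_nth)
qed

lemma graph_iso_paw_iff:
  "graph_iso paw S \<longleftrightarrow>
    (\<exists>a b c e. distinct [a, b, c, e] \<and> S = ({a, b, c, e}, {{a, b}, {b, c}, {a, c}, {c, e}}))"
  unfolding paw_def by (subst graph_iso_quadruple_iff) auto

lemma graph_iso_C4_iff:
  "graph_iso C4 S \<longleftrightarrow>
    (\<exists>a b c d. distinct [a, b, c, d] \<and> S = ({a, b, c, d}, {{a, b}, {b, c}, {c, d}, {d, a}}))"
  unfolding C4_def by (subst graph_iso_quadruple_iff) auto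

definition adjacent :: "'a graph \<Rightarrow> 'a \<Rightarrow> 'a \<Rightarrow> bool" where
  "adjacent G u v \<longleftrightarrow> {u, v} \<in> snd G"

lemma adjacent_sym: "adjacent G u v \<Longrightarrow> adjacent G v u"
  by (simp add: adjacent_def insert_commute)

lemma adjacent_simple_graph:
  assumes "simple_graph G" "adjacent G u v"
  shows "u \<in> fst G" "v \<in> fst G" "u \<noteq> v"
  using assms unfolding simple_graph_def adjacent_def by (metis doubleton_eq_iff)+

lemma finite_subgraphs:
  assumes "simple_graph G"
  shows "finite (subgraphs G)"
proof -
  have "snd G \<subseteq> Pow (fst G)"
    using assms by (fastforce simp: simple_graph_def)
  then have "subgraphs G \<subseteq> Pow (fst G) \<times> Pow (snd G)" "finite (fst G)" "finite (snd G)"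
    using assms finite_subset by (auto simp: subgraphs_def simple_graph_def)
  then show ?thesis
    by (meson finite_Pow_iff finite_SigmaI finite_subset)
qed

lemma edge_set_subgraph_iff:
  assumes "simple_graph G" "V' = \<Union>E'"
  shows "(V', E') \<in> subgraphs G \<longleftrightarrow> E' \<subseteq> snd G"
  using assms by (fastforce simp: subgraphs_def simple_graph_def)

lemma free_C4_iff_no_4_cycle_edges:
  assumes "simple_graph G"
  shows "free C4 G \<longleftrightarrow>
    (\<forall>a b c d. distinct [a, b, c, d] \<longrightarrow> \<not> {{a, b}, {b, c}, {c, d}, {d, a}} \<subseteq> snd G)"
proof -
  have "({a, b, c, d}, {{a, b}, {b, c}, {c, d}, {d, a}}) \<in> subgraphs G
      \<longleftrightarrow> {{a, b}, {b, c}, {c, d}, {d, a}} \<subseteq> snd G" for a b c d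
    by (rule edge_set_subgraph_iff[OF assms]) auto
  moreover have "{S \<in> subgraphs G. graph_iso C4 S} = {} \<longleftrightarrow>
      (\<forall>a b c d. distinct [a, b, c, d] \<longrightarrow>
        ({a, b, c, d}, {{a, b}, {b, c}, {c, d}, {d, a}}) \<notin> subgraphs G)"
    unfolding graph_iso_C4_iff by blast
  moreover have "free C4 G \<longleftrightarrow> {S \<in> subgraphs G. graph_iso C4 S} = {}"
    using finite_subgraphs[OF assms] by (simp add: free_def count_sub_def)
  ultimately show ?thesis
    by simp
qed

lemma free_C4_iff:
  assumes "simple_graph G"
  shows "free C4 G \<longleftrightarrow> (\<forall>a b c d. adjacent G a b \<longrightarrow> adjacent G b c \<longrightarrow> adjacent G c d
    \<longrightarrow> adjacent G d a \<longrightarrow> a = c \<or> b = d)" (is "_ \<longleftrightarrow> ?no_4_cycle")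
  unfolding free_C4_iff_no_4_cycle_edges[OF assms]
proof
  assume no_quad: "\<forall>a b c d. distinct [a, b, c, d] \<longrightarrow> \<not> {{a, b}, {b, c}, {c, d}, {d, a}} \<subseteq> snd G"
  show ?no_4_cycle
  proof (intro allI impI)
    fix a b c d
    assume edges: "adjacent G a b" "adjacent G b c" "adjacent G c d" "adjacent G d a"
    then have "a \<noteq> b" "b \<noteq> c" "c \<noteq> d" "d \<noteq> a"
      using adjacent_simple_graph(3)[OF assms] by blast+
    then show "a = c \<or> b = d"
      using edges no_quad[rule_format, of a b c d] by (auto simp: adjacent_def)
  qed
next
  assume no_4_cycle: ?no_4_cycle
  show "\<forall>a b c d. distinct [a, b, c, d] \<longrightarrow> \<not> {{a, b}, {b, c}, {c, d}, {d, a}} \<subseteq> snd G"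
  proof (intro allI impI notI)
    fix a b c d
    assume "distinct [a, b, c, d]" "{{a, b}, {b, c}, {c, d}, {d, a}} \<subseteq> snd G"
    then show False
      using no_4_cycle[rule_format, of a b c d] by (auto simp: adjacent_def)
  qed
qed

lemma c4_free_graph_adjacent:
  assumes "simple_graph G" "free C4 G"
  shows "c4_free_graph (fst G) (adjacent G)"
proof
  show "finite (fst G)"
    using assms(1) by (simp add: simple_graph_def)
  show "adjacent G u v \<Longrightarrow> u \<in> fst G \<and> v \<in> fst G" for u v
    using adjacent_simple_graph[OF assms(1)] by blast
  show "adjacent G u v \<Longrightarrow> adjacent G v u" for u v
    by (rule adjacent_sym)
  show "\<not> adjacent G u u" for u
    using adjacent_simple_graph(3)[OF assms(1)] by blast
  show "adjacent G a b \<Longrightarrow> adjacent G b c \<Longrightarrow> adjacent G c d \<Longrightarrow> adjacent G d a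
      \<Longrightarrow> a = c \<or> b = d" for a b c d
    using assms(2) free_C4_iff[OF assms(1)] by blast
qed

definition paw_graph :: "'a \<times> 'a \<times> 'a \<times> 'a \<Rightarrow> 'a graph" where
  "paw_graph = (\<lambda>(a, b, c, e). ({a, b, c, e}, {{a, b}, {b, c}, {a, c}, {c, e}}))"

lemma paw_edges_eqD:
  assumes "distinct [a, b, c, e]" "distinct [a', b', c', e']"
    and edges: "{{a, b}, {b, c}, {a, c}, {c, e}} = {{a', b'}, {b', c'}, {a', c'}, {c', e'}}"
  shows "{a', b'} = {a, b} \<and> c' = c \<and> e' = e"
proof -
  have ce: "{c, e} \<in> {{a', b'}, {b', c'}, {a', c'}, {c', e'}}"
    and ac: "{a, c} \<in> {{a', b'}, {b', c'}, {a', c'}, {c', e'}}"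
    and bc: "{b, c} \<in> {{a', b'}, {b', c'}, {a', c'}, {c', e'}}"
    unfolding edges[symmetric] by simp_all
  have ab': "{a', b'} \<in> {{a, b}, {b, c}, {a, c}, {c, e}}"
    unfolding edges by simp
  have "c' = c"
    \<comment> \<open>\<open>c\<close> and \<open>c'\<close> are the only vertices lying on three of the four edges\<close>
    using ce ac bc assms(1,2) by (auto simp: doubleton_eq_iff)
  moreover from this have "{a', b'} = {a, b}"
    using ab' assms(1,2) by (auto simp: doubleton_eq_iff)
  moreover from calculation have "e' = e"
    using ce assms(1,2) by (auto simp: doubleton_eq_iff)
  ultimately show ?thesis
    by blast
qed

lemma ordered_paws_distinct:
  assumes "simple_graph G" "(a, b, c, e) \<in> ordered_paws (adjacent G)"
  shows "distinct [a, b, c, e]"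
  using assms(2) adjacent_simple_graph(3)[OF assms(1)] by (auto simp: ordered_paws_def)

lemma paw_subgraphs_eq:
  assumes "simple_graph G"
  shows "{S \<in> subgraphs G. graph_iso paw S} = paw_graph ` ordered_paws (adjacent G)"
proof -
  have subgraph: "({a, b, c, e}, {{a, b}, {b, c}, {a, c}, {c, e}}) \<in> subgraphs G \<longleftrightarrow>
      adjacent G a b \<and> adjacent G b c \<and> adjacent G a c \<and> adjacent G c e" for a b c e
    by (subst edge_set_subgraph_iff[OF assms]) (auto simp: adjacent_def)
  show ?thesis
  proof (intro equalityI subsetI)
    fix S
    assume "S \<in> {S \<in> subgraphs G. graph_iso paw S}"
    then obtain a b c e where "distinct [a, b, c, e]" "S \<in> subgraphs G"
      and S: "S = ({a, b, c, e}, {{a, b}, {b, c}, {a, c}, {c, e}})"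
      by (auto simp: graph_iso_paw_iff)
    then have "(a, b, c, e) \<in> ordered_paws (adjacent G)"
      using subgraph by (auto simp: ordered_paws_def)
    moreover have "S = paw_graph (a, b, c, e)"
      by (simp add: S paw_graph_def)
    ultimately show "S \<in> paw_graph ` ordered_paws (adjacent G)"
      by blast
  next
    fix S
    assume "S \<in> paw_graph ` ordered_paws (adjacent G)"
    then obtain a b c e where p: "(a, b, c, e) \<in> ordered_paws (adjacent G)" "S = paw_graph (a, b, c, e)"
      by auto
    then show "S \<in> {S \<in> subgraphs G. graph_iso paw S}"
      using subgraph ordered_paws_distinct[OF assms p(1)]
      by (auto simp: graph_iso_paw_iff paw_graph_def ordered_paws_def)
  qed
qed

lemma ordered_paws_fibre:
  assumes "simple_graph G" "(a, b, c, e) \<in> ordered_paws (adjacent G)"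
  shows "{q \<in> ordered_paws (adjacent G). paw_graph q = paw_graph (a, b, c, e)}
    = {(a, b, c, e), (b, a, c, e)}"
proof (intro equalityI subsetI)
  fix q
  assume q: "q \<in> {q \<in> ordered_paws (adjacent G). paw_graph q = paw_graph (a, b, c, e)}"
  obtain a' b' c' e' where q_eq: "q = (a', b', c', e')"
    by (cases q)
  have "{a', b'} = {a, b} \<and> c' = c \<and> e' = e"
    using paw_edges_eqD[OF ordered_paws_distinct[OF assms] ordered_paws_distinct[OF assms(1), of a' b' c' e']] q
    by (simp add: q_eq paw_graph_def)
  then show "q \<in> {(a, b, c, e), (b, a, c, e)}"
    by (auto simp: q_eq doubleton_eq_iff)
next
  fix q
  assume "q \<in> {(a, b, c, e), (b, a, c, e)}"
  then show "q \<in> {q \<in> ordered_paws (adjacent G). paw_graph q = paw_graph (a, b, c, e)}"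
    using assms(2) adjacent_sym[of G a b] by (auto simp: ordered_paws_def paw_graph_def insert_commute)
qed

lemma card_ordered_paws_eq_count_sub:
  assumes "simple_graph G"
  shows "card (ordered_paws (adjacent G)) = 2 * count_sub paw G"
proof -
  let ?P = "ordered_paws (adjacent G)"
  have "?P \<subseteq> fst G \<times> fst G \<times> fst G \<times> fst G"
    using adjacent_simple_graph[OF assms] by (auto simp: ordered_paws_def)
  then have "finite ?P"
    using assms by (auto simp: simple_graph_def intro: finite_subset)
  moreover have "card {q \<in> ?P. paw_graph q = paw_graph p} = 2" if "p \<in> ?P" for p
  proof -
    obtain a b c e where p: "p = (a, b, c, e)"
      by (cases p)
    then have "distinct [a, b, c, e]"
      using ordered_paws_distinct[OF assms] that by simp
    then show ?thesis
      using ordered_paws_fibre[OF assms] that p by simp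
  qed
  ultimately have "card ?P = 2 * card (paw_graph ` ?P)"
    by (rule card_eq_mult_card_image)
  then show ?thesis
    by (simp add: count_sub_def paw_subgraphs_eq[OF assms])
qed

section \<open>The friendship graph\<close>

definition mate :: "nat \<Rightarrow> nat" where
  "mate v = (if odd v then v + 1 else v - 1)"

lemma mate_in_range: "u \<in> {1..2 * h} \<Longrightarrow> mate u \<in> {1..2 * h} \<and> mate u \<noteq> u"
  by (simp add: mate_def) presburger

lemma matching_edge_iff:
  "(\<exists>i. 1 \<le> i \<and> i \<le> h \<and> {u, v} = {2 * i - 1, 2 * i}) \<longleftrightarrow> u \<in> {1..2 * h} \<and> v = mate u"
proof
  assume "\<exists>i. 1 \<le> i \<and> i \<le> h \<and> {u, v} = {2 * i - 1, 2 * i}"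
  then obtain i where "1 \<le> i" "i \<le> h" "(u = 2 * i - 1 \<and> v = 2 * i) \<or> (u = 2 * i \<and> v = 2 * i - 1)"
    by (auto simp: doubleton_eq_iff)
  then show "u \<in> {1..2 * h} \<and> v = mate u"
    by (auto simp: mate_def)
next
  assume u: "u \<in> {1..2 * h} \<and> v = mate u"
  show "\<exists>i. 1 \<le> i \<and> i \<le> h \<and> {u, v} = {2 * i - 1, 2 * i}"
  proof (cases "odd u")
    case True
    then show ?thesis
      using u by (intro exI[of _ "(u + 1) div 2"]) (auto simp: mate_def elim!: oddE)
  next
    case False
    then show ?thesis
      using u by (intro exI[of _ "u div 2"]) (auto simp: mate_def insert_commute elim!: evenE)
  qed
qed

lemma adjacent_friendship_iff:
  "adjacent (friendship n) u v \<longleftrightarrow>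
    (u = 0 \<and> v \<in> {1..<n}) \<or> (v = 0 \<and> u \<in> {1..<n}) \<or> (u \<in> {1..2 * ((n - 1) div 2)} \<and> v = mate u)"
proof -
  have "{u, v} \<in> {{0, w} | w. 1 \<le> w \<and> w < n} \<longleftrightarrow> (u = 0 \<and> v \<in> {1..<n}) \<or> (v = 0 \<and> u \<in> {1..<n})"
    by (auto simp: doubleton_eq_iff)
  moreover have "{u, v} \<in> {{2 * i - 1, 2 * i} | i. 1 \<le> i \<and> i \<le> (n - 1) div 2}
      \<longleftrightarrow> u \<in> {1..2 * ((n - 1) div 2)} \<and> v = mate u"
    using matching_edge_iff[of "(n - 1) div 2" u v] by auto
  ultimately show ?thesis
    unfolding adjacent_def friendship_def by auto
qed

lemma simple_graph_friendship: "simple_graph (friendship n)"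
  unfolding simple_graph_def
proof (intro conjI ballI)
  show "finite (fst (friendship n))"
    by (simp add: friendship_def)
  fix e
  assume "e \<in> snd (friendship n)"
  then obtain u v where "e = {u, v}" "adjacent (friendship n) u v"
    by (auto simp: friendship_def adjacent_def)
  moreover from this(2) have "u \<noteq> v" "u < n" "v < n"
    using mate_in_range[of u "(n - 1) div 2"] unfolding adjacent_friendship_iff by auto
  ultimately show "\<exists>u v. e = {u, v} \<and> u \<noteq> v \<and> u \<in> fst (friendship n) \<and> v \<in> fst (friendship n)"
    by (auto simp: friendship_def)
qed

lemma friendship_in_graphs_on: "friendship n \<in> graphs_on n"
  using simple_graph_friendship by (simp add: graphs_on_def friendship_def)

lemma adjacent_friendship_nonzero:
  "u \<noteq> 0 \<Longrightarrow> adjacent (friendship n) u v \<Longrightarrow> v = 0 \<or> v = mate u"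
  by (auto simp: adjacent_friendship_iff)

lemma friendship_common_nbrs:
  assumes "x \<noteq> x'" "y \<noteq> y'"
    and "adjacent (friendship n) x y" "adjacent (friendship n) x y'"
    and "adjacent (friendship n) x' y" "adjacent (friendship n) x' y'"
  shows "y = 0 \<or> y' = 0"
proof -
  obtain z where "z \<noteq> 0" "adjacent (friendship n) z y" "adjacent (friendship n) z y'"
    using assms by (cases "x = 0") auto
  then have "y = 0 \<or> y = mate z" "y' = 0 \<or> y' = mate z"
    using adjacent_friendship_nonzero by blast+
  then show ?thesis
    using assms(2) by auto
qed

lemma free_C4_friendship: "free C4 (friendship n)"
  unfolding free_C4_iff[OF simple_graph_friendship]
proof (intro allI impI)
  fix a b c d
  assume edges: "adjacent (friendship n) a b" "adjacent (friendship n) b c"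
    "adjacent (friendship n) c d" "adjacent (friendship n) d a"
  show "a = c \<or> b = d"
  proof (rule ccontr)
    assume "\<not> (a = c \<or> b = d)"
    then have "a \<noteq> c" "b \<noteq> d"
      by auto
    have "b = 0 \<or> d = 0"
      by (rule friendship_common_nbrs[OF \<open>a \<noteq> c\<close> \<open>b \<noteq> d\<close> edges(1)
            adjacent_sym[OF edges(4)] adjacent_sym[OF edges(2)] edges(3)])
    moreover have "a = 0 \<or> c = 0"
      by (rule friendship_common_nbrs[OF \<open>b \<noteq> d\<close> \<open>a \<noteq> c\<close> adjacent_sym[OF edges(1)]
            edges(2) edges(4) adjacent_sym[OF edges(3)]])
    ultimately show False
      using edges adjacent_simple_graph(3)[OF simple_graph_friendship] by blast
  qed
qed

lemma card_ordered_paws_friendship: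
  assumes "3 \<le> n"
  shows "card (ordered_paws (adjacent (friendship n))) = 2 * ((n - 1) div 2) * (n - 3)"
proof -
  interpret c4_free_graph "{0..<n}" "adjacent (friendship n)"
    using c4_free_graph_adjacent[OF simple_graph_friendship free_C4_friendship]
    by (simp add: friendship_def)
  let ?h = "(n - 1) div 2"
  have "deg c - 2 = 0" if "c \<noteq> 0" for c
  proof -
    have "nbrs c \<subseteq> {0, mate c}"
      using adjacent_friendship_nonzero[OF that] by (auto simp: nbrs_def)
    moreover have "card {0, mate c} \<le> 2"
      by (cases "mate c = 0") auto
    ultimately show ?thesis
      using card_mono[of "{0, mate c}" "nbrs c"] by simp
  qed
  then have "card (ordered_paws (adjacent (friendship n))) = card (nbhd_edges 0) * (deg 0 - 2)"
    unfolding card_ordered_paws using assms by (simp add: sum.remove[of _ 0])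
  moreover have "nbrs 0 = {1..<n}"
    by (auto simp: nbrs_def adjacent_friendship_iff)
  moreover have "nbhd_edges 0 = (\<lambda>a. (a, mate a)) ` {1..2 * ?h}"
  proof -
    have "2 * ?h < n"
      using assms by linarith
    then have "mate a \<in> {1..<n} \<and> mate a \<noteq> a" if "a \<in> {1..2 * ?h}" for a
      using mate_in_range[OF that] by auto
    then show ?thesis
      using \<open>2 * ?h < n\<close> by (auto simp: nbhd_edges_def adjacent_friendship_iff)
  qed
  moreover have "card ((\<lambda>a. (a, mate a)) ` {1..2 * ?h}) = 2 * ?h"
    by (simp add: card_image inj_on_def)
  ultimately show ?thesis
    by (simp add: numeral_3_eq_3)
qed

lemma count_sub_paw_friendship:
  assumes "3 \<le> n"
  shows "count_sub paw (friendship n) = (n - 1) div 2 * (n - 3)"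
  using card_ordered_paws_eq_count_sub[OF simple_graph_friendship, of n]
    card_ordered_paws_friendship[OF assms]
  by simp

lemma count_sub_paw_le:
  assumes "G \<in> graphs_on n" "free C4 G" "50 \<le> n"
  shows "count_sub paw G \<le> (n - 1) div 2 * (n - 3)"
proof -
  have "simple_graph G" "fst G = {0..<n}"
    using assms(1) by (auto simp: graphs_on_def)
  interpret c4_free_graph "fst G" "adjacent G"
    by (rule c4_free_graph_adjacent[OF \<open>simple_graph G\<close> assms(2)])
  have "2 * count_sub paw G \<le> 2 * ((n - 1) div 2) * (n - 3)"
    using card_ordered_paws_le card_ordered_paws_eq_count_sub[OF \<open>simple_graph G\<close>]
      \<open>fst G = {0..<n}\<close> assms(3)
    by simp
  then show ?thesis
    by simp
qed

lemma ex_gen_paw_C4: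
  assumes "50 \<le> n"
  shows "ex_gen n paw C4 = count_sub paw (friendship n)"
proof -
  let ?counts = "{count_sub paw G | G. G \<in> graphs_on n \<and> free C4 G}"
  have bound: "k \<le> count_sub paw (friendship n)" if "k \<in> ?counts" for k
    using that count_sub_paw_le count_sub_paw_friendship assms by auto
  then have "finite ?counts"
    by (meson finite_atMost finite_subset subsetI atMost_iff)
  moreover have "count_sub paw (friendship n) \<in> ?counts"
    using friendship_in_graphs_on free_C4_friendship by blast
  ultimately show ?thesis
    unfolding ex_gen_def using bound by (intro Max_eqI) auto
qed

lemma paw_count_closed_form:
  assumes "3 \<le> n"
  shows "int ((n - 1) div 2 * (n - 3)) =
    (if odd n then int (n choose 2) - 3 * (int n - 1) div 2 else int (n choose 2) - 2 * int n + 3)"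
proof (cases "odd n")
  case True
  then obtain m where n: "n = 2 * m + 1"
    by (rule oddE)
  have "n choose 2 = m * (2 * m + 1)"
    using n by (simp add: choose_two algebra_simps)
  moreover have "int (m * (n - 3)) = int m * (2 * int m - 2)"
    using n assms by (simp add: of_nat_diff)
  ultimately show ?thesis
    using True n by (simp add: algebra_simps)
next
  case False
  then obtain m where n: "n = 2 * m"
    by auto
  have "n * (n - 1) = 2 * (m * (2 * m - 1))"
    using n by (simp add: algebra_simps)
  then have "n choose 2 = m * (2 * m - 1)"
    by (simp add: choose_two)
  moreover have "(n - 1) div 2 = m - 1"
    using n assms by presburger
  moreover have "int ((m - 1) * (n - 3)) = (int m - 1) * (2 * int m - 3)"
    and "int (m * (2 * m - 1)) = int m * (2 * int m - 1)"
    using n assms by (simp_all add: of_nat_diff)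
  ultimately show ?thesis
    using False n by (simp add: algebra_simps)
qed

theorem theorem3p11:
  shows "\<exists>n0::nat. \<forall>n\<ge>n0.
    ex_gen n paw C4 = count_sub paw (friendship n) \<and>
    int (count_sub paw (friendship n)) =
      (if odd n then int (n choose 2) - 3 * (int n - 1) div 2
       else int (n choose 2) - 2 * int n + 3)"
proof (intro exI[of _ 50] allI impI conjI)
  fix n :: nat
  assume "50 \<le> n"
  then show "ex_gen n paw C4 = count_sub paw (friendship n)"
    by (rule ex_gen_paw_C4)
  show "int (count_sub paw (friendship n)) =
      (if odd n then int (n choose 2) - 3 * (int n - 1) div 2
       else int (n choose 2) - 2 * int n + 3)"
    using \<open>50 \<le> n\<close> count_sub_paw_friendship paw_count_closed_form by simp
qed

end
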